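(* Let $I$ be the ideal of $\mathrm{WCQSym}$ generated by $B_\varepsilon=\{M_\gamma:\gamma\in\mathcal C_\varepsilon\}$. For every $\tilde{\mathbb N}$-composition $\alpha\in\mathcal C_N$, $$M_\alpha+(-1)^{\ell_\varepsilon(\alpha)+1}M_{\bar\alpha}\in I.$$
   Context: $\tilde{\mathbb N}=\mathbb N\cup\{\varepsilon\}$ with $0+\varepsilon=\varepsilon+\varepsilon=\varepsilon$ and $n+\varepsilon=n$ for integers $n\ge1$. $\mathbf{k}$ is a commutative ring containing $\mathbb Q$; $\mathbf{k}[[X]]_{\tilde{\mathbb N}}$, $X=\{x_1<x_2<\cdots\}$, is the algebra of possibly infinite linear combinations of formal monomials $\prod x_i^{f(x_i)}$ with $f$ finitely supported $\tilde{\mathbb N}$-valued, multiplied by adding exponents in $\tilde{\mathbb N}$. An $\tilde{\mathbb N}$-composition is a finite (possibly empty) sequence of elements of $\{\varepsilon,1,2,\dots\}$; $M_{(\gamma_1,\dots,\gamma_k)}=\sum_{1\le i_1<\cdots<i_k}x_{i_1}^{\gamma_1}\cdots x_{i_k}^{\gamma_k}$, $M_\emptyset=1$, and $\mathrm{WCQSym}$ is their $\mathbf k$-span, a subalgebra of $\mathbf{k}[[X]]_{\tilde{\mathbb N}}$. $\ell_\varepsilon(\alpha)$ is the number of entries of $\alpha$ equal to $\varepsilon$ and $\bar\alpha$ is $\alpha$ with its $\varepsilon$ entries deleted. $\mathcal C_\varepsilon$ is the set of $\tilde{\mathbb N}$-compositions with first entry $\varepsilon$, and $\mathcal C_N$ the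 set of all others (the empty composition and those whose first entry is a positive integer). *)

theory Defs
  imports Main
begin

text \<open>The exponent monoid N-tilde = N \<union> {eps}. Num 0 is the integer 0.\<close>
datatype ntilde = Eps | Num nat

fun tplus :: "ntilde \<Rightarrow> ntilde \<Rightarrow> ntilde" where
  "tplus (Num a) (Num b) = Num (a + b)"
| "tplus (Num 0) Eps = Eps"
| "tplus (Num (Suc n)) Eps = Num (Suc n)"
| "tplus Eps (Num 0) = Eps"
| "tplus Eps (Num (Suc n)) = Num (Suc n)"
| "tplus Eps Eps = Eps"

text \<open>Exponent maps: variable x_(i+1) is indexed by i :: nat.\<close>
definition finsupp :: "(nat \<Rightarrow> ntilde) \<Rightarrow> bool" where
  "finsupp f \<longleftrightarrow> finite {i. f i \<noteq> Num 0}"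

text \<open>Elements of k[[X]]_Ntilde: coefficient functions on monomials
  (only finitely supported exponent maps are genuine monomials).\<close>
type_synonym 'k wser = "(nat \<Rightarrow> ntilde) \<Rightarrow> 'k"

definition wmult :: "'k::comm_ring_1 wser \<Rightarrow> 'k wser \<Rightarrow> 'k wser" where
  "wmult F G = (\<lambda>h. \<Sum>p\<in>{(f, g). finsupp f \<and> finsupp g \<and> (\<lambda>i. tplus (f i) (g i)) = h}.
                     F (fst p) * G (snd p))"

definition is_comp :: "ntilde list \<Rightarrow> bool" where
  "is_comp \<alpha> \<longleftrightarrow> Num 0 \<notin> set \<alpha>"

text \<open>Monomial quasisymmetric function M_alpha: the coefficient of x^h is 1 iff
  h is a monomial x_(i1)^(a1) ... x_(ik)^(ak) with i1 < ... < ik, i.e. iff the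
  nonzero exponents of h, read in increasing variable order, form alpha.\<close>
definition Mq :: "ntilde list \<Rightarrow> 'k::comm_ring_1 wser" where
  "Mq \<alpha> = (\<lambda>h. if finsupp h \<and> map h (sorted_list_of_set {i. h i \<noteq> Num 0}) = \<alpha>
                 then 1 else 0)"

definition WCQSym :: "'k::comm_ring_1 wser set" where
  "WCQSym = {F. \<exists>S (c :: ntilde list \<Rightarrow> 'k). finite S \<and> (\<forall>\<alpha>\<in>S. is_comp \<alpha>) \<and>
                   F = (\<lambda>h. \<Sum>\<alpha>\<in>S. c \<alpha> * Mq \<alpha> h)}"

definition C_eps :: "ntilde list set" where
  "C_eps = {\<gamma>. is_comp \<gamma> \<and> \<gamma> \<noteq> [] \<and> hd \<gamma> = Eps}"

definition C_N :: "ntilde list set" where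
  "C_N = {\<gamma>. is_comp \<gamma> \<and> (\<gamma> = [] \<or> hd \<gamma> \<noteq> Eps)}"

definition I_eps :: "'k::comm_ring_1 wser set" where
  "I_eps = {F. \<exists>n (w :: nat \<Rightarrow> 'k wser) \<gamma>. (\<forall>j<n. w j \<in> WCQSym \<and> \<gamma> j \<in> C_eps) \<and>
                   F = (\<lambda>h. \<Sum>j<n. wmult (w j) (Mq (\<gamma> j)) h)}"

definition len_eps :: "ntilde list \<Rightarrow> nat" where
  "len_eps \<alpha> = length (filter (\<lambda>x. x = Eps) \<alpha>)"

definition bar :: "ntilde list \<Rightarrow> ntilde list" where
  "bar \<alpha> = filter (\<lambda>x. x \<noteq> Eps) \<alpha>"

end

theory Submission
  imports Defs
begin

(*
  Multiplying M_u by a generator M_(eps v) is a quasi-shuffle in which the leading eps of eps v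
  either stays in front, or lands right after some letter u_j of u, or is absorbed into u_j
  (u_j + eps = u_j for u_j <> 0). If u is a nonempty composition not starting with eps, the terms
  attached to the last letter of u are exactly M_(u eps v) + M_(u v); every other term is a
  multiple of some M_(eps s), which lies in I, or of M_(u' eps s) + M_(u' s) for a proper prefix
  u' of u, which lies in I by induction on the length of u. Hence M_(u eps v) = -M_(u v) modulo I,
  and deleting the eps entries of alpha one at a time gives M_alpha = (-1)^l_eps(alpha) M_bar(alpha).
*)

lemma tplus_Num0_left [simp]: "tplus (Num 0) x = x"
  by (cases x) auto

lemma tplus_Num0_right [simp]: "tplus x (Num 0) = x"
  by (cases "(x, Num 0)" rule: tplus.cases) auto

lemma tplus_eq_Num0_iff: "tplus x y = Num 0 \<longleftrightarrow> x = Num 0 \<and> y = Num 0"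
  by (cases "(x, y)" rule: tplus.cases) auto

lemma tplus_Eps_right: "x \<noteq> Num 0 \<Longrightarrow> tplus x Eps = x"
  by (cases "(x, Eps)" rule: tplus.cases) auto

fun nt_nat :: "ntilde \<Rightarrow> nat" where
  "nt_nat Eps = 0"
| "nt_nat (Num k) = k"

lemma nt_nat_tplus: "nt_nat (tplus x y) = nt_nat x + nt_nat y"
  by (cases "(x, y)" rule: tplus.cases) auto

lemma finite_nt_nat_le: "finite {x. nt_nat x \<le> k}"
proof (rule finite_subset)
  show "{x. nt_nat x \<le> k} \<subseteq> insert Eps (Num ` {..k})"
  proof
    fix x assume "x \<in> {x. nt_nat x \<le> k}"
    then show "x \<in> insert Eps (Num ` {..k})" by (cases x) auto
  qed
qed simp

definition supp :: "(nat \<Rightarrow> ntilde) \<Rightarrow> nat set" where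
  "supp h = {i. h i \<noteq> Num 0}"

definition comp_of :: "(nat \<Rightarrow> ntilde) \<Rightarrow> ntilde list" where
  "comp_of h = map h (sorted_list_of_set (supp h))"

lemma Mq_eq_comp_of: "Mq \<alpha> h = (if finsupp h \<and> comp_of h = \<alpha> then 1 else 0)"
  unfolding Mq_def comp_of_def supp_def by simp

lemma Num0_notin_comp_of: "finsupp h \<Longrightarrow> Num 0 \<notin> set (comp_of h)"
  unfolding comp_of_def supp_def finsupp_def by auto

lemma Mq_not_comp: "\<not> is_comp \<gamma> \<Longrightarrow> Mq \<gamma> = (\<lambda>h. 0)"
  by (rule ext) (auto simp: Mq_eq_comp_of is_comp_def dest: Num0_notin_comp_of)

(* The coefficient of M_t in M_u * M_v: the first letter of t is the first letter of v, or of u,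
   or the tplus-sum of both. *)
fun qsh_count :: "ntilde list \<Rightarrow> ntilde list \<Rightarrow> ntilde list \<Rightarrow> nat" where
  "qsh_count u v [] = (if u = [] \<and> v = [] then 1 else 0)"
| "qsh_count u v (x # t) =
     (if v \<noteq> [] \<and> hd v = x then qsh_count u (tl v) t else 0)
   + (if u \<noteq> [] \<and> hd u = x then qsh_count (tl u) v t else 0)
   + (if u \<noteq> [] \<and> v \<noteq> [] \<and> hd u \<noteq> Num 0 \<and> hd v \<noteq> Num 0 \<and> tplus (hd u) (hd v) = x
      then qsh_count (tl u) (tl v) t else 0)"

lemma qsh_count_Nil_left: "qsh_count [] v t = (if t = v then 1 else 0)"
proof (induction t arbitrary: v)
  case (Cons x t)
  then show ?case by (cases v) auto
qed simp

definition splittings :: "ntilde list \<Rightarrow> (ntilde list \<times> ntilde list) set" where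
  "splittings t =
     {(a, b). length a = length t \<and> length b = length t \<and> map2 tplus a b = t}"

definition shuffle_splittings ::
    "ntilde list \<Rightarrow> ntilde list \<Rightarrow> ntilde list \<Rightarrow> (ntilde list \<times> ntilde list) set" where
  "shuffle_splittings u v t =
     {(a, b) \<in> splittings t. filter (\<lambda>x. x \<noteq> Num 0) a = u \<and> filter (\<lambda>x. x \<noteq> Num 0) b = v}"

lemma splittings_Cons_subset:
  "splittings (x # t) \<subseteq> (\<lambda>((a0, b0), (a, b)). (a0 # a, b0 # b)) `
     (({y. nt_nat y \<le> nt_nat x} \<times> {y. nt_nat y \<le> nt_nat x}) \<times> splittings t)"
proof
  fix p assume "p \<in> splittings (x # t)"
  then obtain a0 a b0 b where p: "p = (a0 # a, b0 # b)" and x: "tplus a0 b0 = x"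
    and ab: "(a, b) \<in> splittings t"
    by (auto simp: splittings_def length_Suc_conv)
  then have "nt_nat a0 \<le> nt_nat x" "nt_nat b0 \<le> nt_nat x"
    using nt_nat_tplus[of a0 b0] by auto
  with p ab show "p \<in> (\<lambda>((a0, b0), (a, b)). (a0 # a, b0 # b)) `
      (({y. nt_nat y \<le> nt_nat x} \<times> {y. nt_nat y \<le> nt_nat x}) \<times> splittings t)"
    by (intro image_eqI[where x = "((a0, b0), (a, b))"]) auto
qed

lemma finite_splittings: "finite (splittings t)"
proof (induction t)
  case Nil
  have "splittings [] = {([], [])}" by (auto simp: splittings_def)
  then show ?case by simp
next
  case (Cons x t)
  then show ?case
    by (intro finite_subset[OF splittings_Cons_subset]) (simp add: finite_nt_nat_le)
qed

lemma finite_shuffle_splittings: "finite (shuffle_splittings u v t)"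
  by (rule finite_subset[OF _ finite_splittings[of t]]) (auto simp: shuffle_splittings_def)

lemma shuffle_splittings_Nil:
  "shuffle_splittings u v [] = (if u = [] \<and> v = [] then {([], [])} else {})"
  by (auto simp: shuffle_splittings_def splittings_def)

lemma shuffle_splittings_Cons:
  assumes "x \<noteq> Num 0"
  shows "shuffle_splittings u v (x # t) =
     (if v \<noteq> [] \<and> hd v = x
      then (\<lambda>(a, b). (Num 0 # a, x # b)) ` shuffle_splittings u (tl v) t else {})
   \<union> (if u \<noteq> [] \<and> hd u = x
      then (\<lambda>(a, b). (x # a, Num 0 # b)) ` shuffle_splittings (tl u) v t else {})
   \<union> (if u \<noteq> [] \<and> v \<noteq> [] \<and> hd u \<noteq> Num 0 \<and> hd v \<noteq> Num 0 \<and> tplus (hd u) (hd v) = x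
      then (\<lambda>(a, b). (hd u # a, hd v # b)) ` shuffle_splittings (tl u) (tl v) t else {})"
    (is "?L = ?R")
proof
  show "?L \<subseteq> ?R"
  proof
    fix p assume "p \<in> ?L"
    then obtain a0 a b0 b where p: "p = (a0 # a, b0 # b)" and x: "tplus a0 b0 = x"
      and ab: "(a, b) \<in> splittings t"
      and u: "filter (\<lambda>x. x \<noteq> Num 0) (a0 # a) = u"
      and v: "filter (\<lambda>x. x \<noteq> Num 0) (b0 # b) = v"
      by (auto simp: shuffle_splittings_def splittings_def length_Suc_conv)
    then have ab': "(a, b) \<in> shuffle_splittings
        (filter (\<lambda>x. x \<noteq> Num 0) a) (filter (\<lambda>x. x \<noteq> Num 0) b) t"
      by (simp add: shuffle_splittings_def)
    consider "a0 = Num 0" "b0 = x" | "a0 = x" "b0 = Num 0" | "a0 \<noteq> Num 0" "b0 \<noteq> Num 0"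
      using x assms by (cases "a0 = Num 0"; cases "b0 = Num 0") auto
    then show "p \<in> ?R"
    proof cases
      case 1
      with u v assms obtain v' where "v = x # v'" "(a, b) \<in> shuffle_splittings u v' t"
        using ab' by auto
      then show ?thesis
        unfolding p 1 by (auto intro: image_eqI[where x = "(a, b)"])
    next
      case 2
      with u v assms obtain u' where "u = x # u'" "(a, b) \<in> shuffle_splittings u' v t"
        using ab' by auto
      then show ?thesis
        unfolding p 2 by (auto intro: image_eqI[where x = "(a, b)"])
    next
      case 3
      with u v obtain u' v' where "u = a0 # u'" "v = b0 # v'"
        "(a, b) \<in> shuffle_splittings u' v' t"
        using ab' by auto
      then show ?thesis
        unfolding p using 3 x by (auto intro: image_eqI[where x = "(a, b)"])
    qed
  qed
next
  show "?R \<subseteq> ?L"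
  proof
    fix p assume "p \<in> ?R"
    then consider
        (left) a b where "v \<noteq> []" "hd v = x" "(a, b) \<in> shuffle_splittings u (tl v) t"
          "p = (Num 0 # a, x # b)"
      | (right) a b where "u \<noteq> []" "hd u = x" "(a, b) \<in> shuffle_splittings (tl u) v t"
          "p = (x # a, Num 0 # b)"
      | (both) a b where "u \<noteq> []" "v \<noteq> []" "hd u \<noteq> Num 0" "hd v \<noteq> Num 0"
          "tplus (hd u) (hd v) = x" "(a, b) \<in> shuffle_splittings (tl u) (tl v) t"
          "p = (hd u # a, hd v # b)"
      by (auto split: if_splits)
    then show "p \<in> ?L"
    proof cases
      case left
      then show ?thesis
        using assms by (cases v) (auto simp: shuffle_splittings_def splittings_def)
    next
      case right
      then show ?thesis
        using assms by (cases u) (auto simp: shuffle_splittings_def splittings_def)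
    next
      case both
      then show ?thesis
        by (cases u; cases v) (auto simp: shuffle_splittings_def splittings_def)
    qed
  qed
qed

lemma card_shuffle_splittings:
  "Num 0 \<notin> set t \<Longrightarrow> card (shuffle_splittings u v t) = qsh_count u v t"
proof (induction t arbitrary: u v)
  case Nil
  then show ?case by (simp add: shuffle_splittings_Nil)
next
  case (Cons x t)
  have x: "x \<noteq> Num 0" and IH: "\<And>u v. card (shuffle_splittings u v t) = qsh_count u v t"
    using Cons by auto
  have card_prepend: "card ((\<lambda>(a, b). (c # a, d # b)) ` S) = card S"
    for c d and S :: "(ntilde list \<times> ntilde list) set"
    by (rule card_image) (auto simp: inj_on_def)
  let ?A = "if v \<noteq> [] \<and> hd v = x
      then (\<lambda>(a, b). (Num 0 # a, x # b)) ` shuffle_splittings u (tl v) t else {}"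
  let ?B = "if u \<noteq> [] \<and> hd u = x
      then (\<lambda>(a, b). (x # a, Num 0 # b)) ` shuffle_splittings (tl u) v t else {}"
  let ?C = "if u \<noteq> [] \<and> v \<noteq> [] \<and> hd u \<noteq> Num 0 \<and> hd v \<noteq> Num 0 \<and> tplus (hd u) (hd v) = x
      then (\<lambda>(a, b). (hd u # a, hd v # b)) ` shuffle_splittings (tl u) (tl v) t else {}"
  have "finite ?A" "finite ?B" "finite ?C"
    by (simp_all add: finite_shuffle_splittings)
  moreover have "?A \<inter> ?B = {}" "(?A \<union> ?B) \<inter> ?C = {}"
    using x by auto
  ultimately have "card (shuffle_splittings u v (x # t)) = card ?A + card ?B + card ?C"
    unfolding shuffle_splittings_Cons[OF x] by (simp add: card_Un_disjoint)
  also have "card ?A = (if v \<noteq> [] \<and> hd v = x then qsh_count u (tl v) t else 0)"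
    by (simp add: card_prepend IH)
  also have "card ?B = (if u \<noteq> [] \<and> hd u = x then qsh_count (tl u) v t else 0)"
    by (simp add: card_prepend IH)
  also have "card ?C = (if u \<noteq> [] \<and> v \<noteq> [] \<and> hd u \<noteq> Num 0 \<and> hd v \<noteq> Num 0
      \<and> tplus (hd u) (hd v) = x then qsh_count (tl u) (tl v) t else 0)"
    by (simp add: card_prepend IH)
  finally show ?case by (simp only: qsh_count.simps)
qed

definition factor_pairs :: "(nat \<Rightarrow> ntilde) \<Rightarrow> ((nat \<Rightarrow> ntilde) \<times> (nat \<Rightarrow> ntilde)) set" where
  "factor_pairs h = {(f, g). finsupp f \<and> finsupp g \<and> (\<lambda>i. tplus (f i) (g i)) = h}"

lemma wmult_eq_sum_factor_pairs: "wmult F G h = (\<Sum>p\<in>factor_pairs h. F (fst p) * G (snd p))"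
  by (simp add: wmult_def factor_pairs_def)

lemma factor_pairs_vanish:
  assumes "(f, g) \<in> factor_pairs h" "i \<notin> supp h"
  shows "f i = Num 0" "g i = Num 0"
  using assms by (auto simp: factor_pairs_def supp_def tplus_eq_Num0_iff)

lemma factor_pairs_not_finsupp: "\<not> finsupp h \<Longrightarrow> factor_pairs h = {}"
proof (rule ccontr)
  assume "\<not> finsupp h" "factor_pairs h \<noteq> {}"
  then obtain f g where fg: "(f, g) \<in> factor_pairs h" by auto
  then have "supp h \<subseteq> supp f \<union> supp g"
    by (auto simp: factor_pairs_def supp_def)
  moreover have "finite (supp f \<union> supp g)"
    using fg by (simp add: factor_pairs_def finsupp_def supp_def)
  ultimately show False
    using \<open>\<not> finsupp h\<close> finite_subset by (auto simp: finsupp_def supp_def)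
qed

lemma wmult_not_finsupp: "\<not> finsupp h \<Longrightarrow> wmult F G h = 0"
  by (simp add: wmult_eq_sum_factor_pairs factor_pairs_not_finsupp)

lemma comp_of_eq_filter:
  assumes "finite (supp h)" "supp f \<subseteq> supp h"
  shows "comp_of f = filter (\<lambda>x. x \<noteq> Num 0) (map f (sorted_list_of_set (supp h)))"
proof -
  let ?L = "sorted_list_of_set (supp h)"
  have "finite (supp f)"
    using assms by (rule finite_subset[rotated])
  have "sorted_list_of_set (supp f) = filter (\<lambda>i. f i \<noteq> Num 0) ?L"
  proof (rule sorted_distinct_set_unique)
    show "set (sorted_list_of_set (supp f)) = set (filter (\<lambda>i. f i \<noteq> Num 0) ?L)"
      using assms \<open>finite (supp f)\<close> by (auto simp: supp_def)
  qed (auto intro: sorted_wrt_filter)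
  then show ?thesis
    by (simp add: comp_of_def filter_map comp_def)
qed

lemma exists_extension_by_Num0:
  assumes "distinct L" "length a = length L"
  shows "\<exists>f. map f L = a \<and> (\<forall>i. i \<notin> set L \<longrightarrow> f i = Num 0)"
proof (intro exI conjI allI impI)
  let ?f = "\<lambda>i. case map_of (zip L a) i of None \<Rightarrow> Num 0 | Some y \<Rightarrow> y"
  show "map ?f L = a"
    using assms by (intro nth_equalityI) (simp_all add: map_of_zip_nth)
  show "?f i = Num 0" if "i \<notin> set L" for i
    using that by (auto split: option.split dest!: map_of_SomeD set_zip_leftD)
qed

lemma bij_betw_factor_pairs_splittings:
  assumes "finsupp h"
  defines "L \<equiv> sorted_list_of_set (supp h)"
  shows "bij_betw (\<lambda>(f, g). (map f L, map g L)) (factor_pairs h) (splittings (comp_of h))"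
proof (rule bij_betw_imageI)
  have L: "set L = supp h" "distinct L"
    using assms by (simp_all add: L_def finsupp_def supp_def)
  have comp_of_h: "comp_of h = map h L"
    by (simp add: comp_of_def L_def)
  show "inj_on (\<lambda>(f, g). (map f L, map g L)) (factor_pairs h)"
  proof (rule inj_onI, clarify)
    fix f g f' g'
    assume fg: "(f, g) \<in> factor_pairs h" and fg': "(f', g') \<in> factor_pairs h"
      and "map f L = map f' L" "map g L = map g' L"
    then show "f = f' \<and> g = g'"
      using factor_pairs_vanish[OF fg] factor_pairs_vanish[OF fg'] L
      by (auto simp: fun_eq_iff map_eq_conv)
  qed
  show "(\<lambda>(f, g). (map f L, map g L)) ` factor_pairs h = splittings (comp_of h)"
  proof
    show "(\<lambda>(f, g). (map f L, map g L)) ` factor_pairs h \<subseteq> splittings (comp_of h)"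
      by (auto simp: factor_pairs_def splittings_def comp_of_h zip_map_map zip_same_conv_map)
  next
    show "splittings (comp_of h) \<subseteq> (\<lambda>(f, g). (map f L, map g L)) ` factor_pairs h"
    proof (clarify)
      fix a b assume ab: "(a, b) \<in> splittings (comp_of h)"
      then have len: "length a = length L" "length b = length L"
        by (simp_all add: splittings_def comp_of_h)
      obtain f where f: "map f L = a" "\<And>i. i \<notin> set L \<Longrightarrow> f i = Num 0"
        using exists_extension_by_Num0[OF L(2) len(1)] by blast
      obtain g where g: "map g L = b" "\<And>i. i \<notin> set L \<Longrightarrow> g i = Num 0"
        using exists_extension_by_Num0[OF L(2) len(2)] by blast
      have "map (\<lambda>i. tplus (f i) (g i)) L = map h L"
        using ab by (simp add: splittings_def comp_of_h f(1)[symmetric] g(1)[symmetric]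
            zip_map_map zip_same_conv_map)
      then have "(\<lambda>i. tplus (f i) (g i)) = h"
        using f g L by (auto simp: fun_eq_iff supp_def map_eq_conv)
      moreover have "finsupp f" "finsupp g"
        using f g by (auto simp: finsupp_def intro: finite_subset[of _ "set L"])
      ultimately show "(a, b) \<in> (\<lambda>(f, g). (map f L, map g L)) ` factor_pairs h"
        using f g by (auto simp: factor_pairs_def)
    qed
  qed
qed

lemma wmult_Mq_Mq:
  assumes "finsupp h"
  shows "wmult (Mq u) (Mq v) h = (of_nat (qsh_count u v (comp_of h)) :: 'k::comm_ring_1)"
proof -
  define L where "L = sorted_list_of_set (supp h)"
  define \<phi> where "\<phi> = (\<lambda>(f :: nat \<Rightarrow> ntilde, g :: nat \<Rightarrow> ntilde). (map f L, map g L))"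
  let ?P = "\<lambda>p. comp_of (fst p) = u \<and> comp_of (snd p) = v"
  have bij: "bij_betw \<phi> (factor_pairs h) (splittings (comp_of h))"
    using bij_betw_factor_pairs_splittings[OF assms] by (simp add: \<phi>_def L_def)
  have fin: "finite (factor_pairs h)"
    using bij_betw_finite[OF bij] finite_splittings by blast
  have P_iff: "?P p \<longleftrightarrow> \<phi> p \<in> shuffle_splittings u v (comp_of h)" if p: "p \<in> factor_pairs h" for p
  proof -
    obtain f g where fg: "p = (f, g)" "(f, g) \<in> factor_pairs h"
      using p by (cases p) auto
    have "finite (supp h)" "supp f \<subseteq> supp h" "supp g \<subseteq> supp h"
      using assms factor_pairs_vanish[OF fg(2)] by (auto simp: finsupp_def supp_def)
    then have "comp_of f = filter (\<lambda>x. x \<noteq> Num 0) (map f L)"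
      "comp_of g = filter (\<lambda>x. x \<noteq> Num 0) (map g L)"
      by (simp_all add: comp_of_eq_filter L_def)
    moreover have "\<phi> p \<in> splittings (comp_of h)"
      using bij p by (auto dest: bij_betw_apply)
    ultimately show ?thesis
      by (simp add: fg \<phi>_def shuffle_splittings_def)
  qed
  have "wmult (Mq u) (Mq v) h = (\<Sum>p\<in>factor_pairs h. if ?P p then 1 else (0 :: 'k))"
    unfolding wmult_eq_sum_factor_pairs
    by (rule sum.cong) (auto simp: Mq_eq_comp_of factor_pairs_def)
  also have "\<dots> = of_nat (card {p \<in> factor_pairs h. ?P p})"
    using fin by (simp add: sum.If_cases Int_def)
  also have "card {p \<in> factor_pairs h. ?P p} = card (shuffle_splittings u v (comp_of h))"
  proof (rule bij_betw_same_card, rule bij_betw_subset[OF bij])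
    have "shuffle_splittings u v (comp_of h) \<subseteq> \<phi> ` factor_pairs h"
      using bij_betw_imp_surj_on[OF bij] by (auto simp: shuffle_splittings_def)
    then show "\<phi> ` {p \<in> factor_pairs h. ?P p} = shuffle_splittings u v (comp_of h)"
      using P_iff by blast
  qed auto
  also have "\<dots> = qsh_count u v (comp_of h)"
    by (rule card_shuffle_splittings[OF Num0_notin_comp_of[OF assms]])
  finally show ?thesis .
qed

(* Counts the terms M_t of M_u * M_(eps v) in which the eps is attached to the j-th letter of u:
   placed right after it, or absorbed into it. *)
definition eps_at :: "ntilde list \<Rightarrow> ntilde list \<Rightarrow> ntilde list \<Rightarrow> nat \<Rightarrow> nat" where
  "eps_at u v t j =
     (if take (Suc j) t = take j u @ [Eps] then qsh_count (drop j u) v (drop (Suc j) t) else 0)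
   + (if take j t = take j u then qsh_count (drop j u) v (drop j t) else 0)"

lemma eps_at_Cons_Suc: "eps_at (a # u) v (x # t) (Suc j) = (if x = a then eps_at u v t j else 0)"
  by (simp add: eps_at_def)

lemma eps_at_0:
  "eps_at u v t 0 = (if take 1 t = [Eps] then qsh_count u v (drop 1 t) else 0) + qsh_count u v t"
  by (simp add: eps_at_def)

lemma qsh_count_Eps_Cons:
  "is_comp u \<Longrightarrow> qsh_count u (Eps # v) t =
     (if take 1 t = [Eps] then qsh_count u v (drop 1 t) else 0) + (\<Sum>j = 1..length u. eps_at u v t j)"
proof (induction u arbitrary: t)
  case Nil
  then show ?case by (cases t) (auto simp: qsh_count_Nil_left)
next
  case (Cons a u)
  have a: "a \<noteq> Num 0" and IH: "\<And>t. qsh_count u (Eps # v) t =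
      (if take 1 t = [Eps] then qsh_count u v (drop 1 t) else 0) + (\<Sum>j = 1..length u. eps_at u v t j)"
    using Cons by (auto simp: is_comp_def)
  show ?case
  proof (cases t)
    case Nil
    then show ?thesis by (auto simp: eps_at_def intro!: sum.neutral)
  next
    case (Cons x t')
    have "(\<Sum>j = 1..Suc (length u). eps_at (a # u) v (x # t') j)
        = eps_at (a # u) v (x # t') 1 + (\<Sum>j = Suc 1..Suc (length u). eps_at (a # u) v (x # t') j)"
      by (rule sum.atLeast_Suc_atMost) simp
    also have "(\<Sum>j = Suc 1..Suc (length u). eps_at (a # u) v (x # t') j)
        = (\<Sum>j = 1..length u. eps_at (a # u) v (x # t') (Suc j))"
      by (rule sum.shift_bounds_cl_Suc_ivl)
    finally show ?thesis
      using a by (cases "x = a") (simp_all add: Cons IH eps_at_Cons_Suc eps_at_0 tplus_Eps_right)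
  qed
qed

lemma qsh_count_nonzeroD:
  assumes "qsh_count u v t \<noteq> 0"
  shows "sum_list (map nt_nat t) = sum_list (map nt_nat (u @ v))"
    and "length t \<le> length u + length v"
  using assms
proof (induction t arbitrary: u v)
  case Nil
  { case 1 then show ?case by (simp split: if_splits) }
  { case 2 then show ?case by simp }
next
  case (Cons x t)
  { case 1 then show ?case
      using Cons.IH(1)[of "tl u" v] Cons.IH(1)[of u "tl v"] Cons.IH(1)[of "tl u" "tl v"]
      by (cases u; cases v)
        (auto simp: nt_nat_tplus split: if_splits dest: arg_cong[where f = nt_nat]) }
  { case 2 then show ?case
      using Cons.IH(2)[of "tl u" v] Cons.IH(2)[of u "tl v"] Cons.IH(2)[of "tl u" "tl v"]
      by (cases u; cases v) (auto split: if_splits) }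
qed

definition qsh_range :: "ntilde list \<Rightarrow> ntilde list \<Rightarrow> ntilde list set" where
  "qsh_range u v = {t. set t \<subseteq> {x. nt_nat x \<le> sum_list (map nt_nat (u @ v))}
                       \<and> length t \<le> length u + length v}"

lemma finite_qsh_range: "finite (qsh_range u v)"
  unfolding qsh_range_def by (rule finite_lists_length_le[OF finite_nt_nat_le])

lemma qsh_count_nonzero_imp_in_range: "qsh_count u v t \<noteq> 0 \<Longrightarrow> t \<in> qsh_range u v"
  using qsh_count_nonzeroD[of u v t] member_le_sum_list[of _ "map nt_nat t"]
  by (auto simp: qsh_range_def)

lemma sum_qsh_count_Mq_append:
  assumes "finsupp h"
  shows "(\<Sum>s\<in>qsh_range u v. of_nat (qsh_count u v s) * Mq (p @ s) h)
       = (of_nat (if take (length p) (comp_of h) = p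
                  then qsh_count u v (drop (length p) (comp_of h)) else 0) :: 'k::comm_ring_1)"
proof (cases "take (length p) (comp_of h) = p")
  case True
  let ?d = "drop (length p) (comp_of h)"
  have Mq_p: "Mq (p @ s) h = (if s = ?d then 1 else 0)" for s
    using assms True append_eq_conv_conj[of p s "comp_of h"] by (auto simp: Mq_eq_comp_of)
  have "(\<Sum>s\<in>qsh_range u v. of_nat (qsh_count u v s) * Mq (p @ s) h)
      = (\<Sum>s\<in>qsh_range u v. if s = ?d then of_nat (qsh_count u v s) else (0 :: 'k))"
    by (rule sum.cong) (simp_all add: Mq_p)
  also have "\<dots> = of_nat (qsh_count u v ?d)"
  proof -
    have "?d \<notin> qsh_range u v \<Longrightarrow> qsh_count u v ?d = 0"
      using qsh_count_nonzero_imp_in_range by blast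
    then show ?thesis by (auto simp: finite_qsh_range)
  qed
  finally show ?thesis
    using True by simp
next
  case False
  then have Mq_p: "Mq (p @ s) h = 0" for s
    by (auto simp: Mq_eq_comp_of)
  show ?thesis
    using False by (simp add: Mq_p)
qed

lemma wmult_Mq_Mq_Eps_Cons:
  assumes "is_comp u"
  shows "wmult (Mq u) (Mq (Eps # v)) h =
      (\<Sum>s\<in>qsh_range u v. of_nat (qsh_count u v s) * Mq (Eps # s) h)
    + (\<Sum>j = 1..length u. \<Sum>s\<in>qsh_range (drop j u) v. of_nat (qsh_count (drop j u) v s)
         * (Mq (take j u @ Eps # s) h + Mq (take j u @ s) h) :: 'k::comm_ring_1)"
proof (cases "finsupp h")
  case False
  then show ?thesis by (simp add: wmult_not_finsupp Mq_eq_comp_of)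
next
  case True
  let ?t = "comp_of h"
  have first: "(\<Sum>s\<in>qsh_range u v. of_nat (qsh_count u v s) * Mq (Eps # s) h)
      = (of_nat (if take 1 ?t = [Eps] then qsh_count u v (drop 1 ?t) else 0) :: 'k)"
    using sum_qsh_count_Mq_append[OF True, of u v "[Eps]"] by (simp cong: if_cong)
  have term_j: "(\<Sum>s\<in>qsh_range (drop j u) v. of_nat (qsh_count (drop j u) v s)
        * (Mq (take j u @ Eps # s) h + Mq (take j u @ s) h)) = (of_nat (eps_at u v ?t j) :: 'k)"
    if "j \<in> {1..length u}" for j
  proof -
    have len: "length (take j u) = j"
      using that by simp
    have "(\<Sum>s\<in>qsh_range (drop j u) v. of_nat (qsh_count (drop j u) v s) * Mq (take j u @ Eps # s) h)
        = (of_nat (if take (Suc j) ?t = take j u @ [Eps]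
                   then qsh_count (drop j u) v (drop (Suc j) ?t) else 0) :: 'k)"
      using sum_qsh_count_Mq_append[OF True, of "drop j u" v "take j u @ [Eps]"] len
      by (simp cong: if_cong)
    moreover have "(\<Sum>s\<in>qsh_range (drop j u) v. of_nat (qsh_count (drop j u) v s) * Mq (take j u @ s) h)
        = (of_nat (if take j ?t = take j u then qsh_count (drop j u) v (drop j ?t) else 0) :: 'k)"
      using sum_qsh_count_Mq_append[OF True, of "drop j u" v "take j u"] len
      by (simp cong: if_cong)
    ultimately show ?thesis
      by (simp add: distrib_left sum.distrib eps_at_def)
  qed
  show ?thesis
    unfolding wmult_Mq_Mq[OF True] qsh_count_Eps_Cons[OF assms] first
    by (simp add: of_nat_sum term_j)
qed

lemma I_eps_zero: "(\<lambda>h. 0) \<in> (I_eps :: 'k::comm_ring_1 wser set)"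
  unfolding I_eps_def by (rule CollectI, rule exI[of _ 0]) simp

lemma I_eps_add:
  assumes "F \<in> (I_eps :: 'k::comm_ring_1 wser set)" "G \<in> I_eps"
  shows "(\<lambda>h. F h + G h) \<in> I_eps"
proof -
  obtain n and w :: "nat \<Rightarrow> 'k wser" and \<gamma> where
    w: "\<forall>j<n. w j \<in> WCQSym \<and> \<gamma> j \<in> C_eps" and F: "F = (\<lambda>h. \<Sum>j<n. wmult (w j) (Mq (\<gamma> j)) h)"
    using assms(1) unfolding I_eps_def by blast
  obtain m and w' :: "nat \<Rightarrow> 'k wser" and \<gamma>' where
    w': "\<forall>j<m. w' j \<in> WCQSym \<and> \<gamma>' j \<in> C_eps" and G: "G = (\<lambda>h. \<Sum>j<m. wmult (w' j) (Mq (\<gamma>' j)) h)"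
    using assms(2) unfolding I_eps_def by blast
  define W where "W j = (if j < n then w j else w' (j - n))" for j
  define \<Gamma> where "\<Gamma> j = (if j < n then \<gamma> j else \<gamma>' (j - n))" for j
  have split: "(\<Sum>j<n + m. f j) = (\<Sum>j<n. f j) + (\<Sum>j<m. f (n + j))" for f :: "nat \<Rightarrow> 'k"
    by (induction m) (simp_all add: add.assoc)
  show ?thesis
    unfolding I_eps_def using w w'
    by (intro CollectI exI[of _ "n + m"] exI[of _ W] exI[of _ \<Gamma>])
      (simp add: split F G W_def \<Gamma>_def)
qed

lemma WCQSym_scale: "F \<in> WCQSym \<Longrightarrow> (\<lambda>h. c * F h) \<in> (WCQSym :: 'k::comm_ring_1 wser set)"
proof -
  assume "F \<in> WCQSym"
  then obtain S c' where "finite S" "\<forall>\<alpha>\<in>S. is_comp \<alpha>" "F = (\<lambda>h. \<Sum>\<alpha>\<in>S. c' \<alpha> * Mq \<alpha> h)"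
    unfolding WCQSym_def by blast
  then show ?thesis
    unfolding WCQSym_def
    by (intro CollectI exI[of _ S] exI[of _ "\<lambda>\<alpha>. c * c' \<alpha>"]) (simp add: sum_distrib_left mult.assoc)
qed

lemma wmult_scale_left: "wmult (\<lambda>h. c * F h) G h = c * wmult F G h"
  unfolding wmult_def by (simp add: sum_distrib_left mult.assoc)

lemma I_eps_scale:
  assumes "F \<in> (I_eps :: 'k::comm_ring_1 wser set)"
  shows "(\<lambda>h. c * F h) \<in> I_eps"
proof -
  obtain n and w :: "nat \<Rightarrow> 'k wser" and \<gamma> where
    w: "\<forall>j<n. w j \<in> WCQSym \<and> \<gamma> j \<in> C_eps" and F: "F = (\<lambda>h. \<Sum>j<n. wmult (w j) (Mq (\<gamma> j)) h)"
    using assms unfolding I_eps_def by blast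
  show ?thesis
    unfolding I_eps_def using w
    by (intro CollectI exI[of _ n] exI[of _ "\<lambda>j h. c * w j h"] exI[of _ \<gamma>])
      (simp add: WCQSym_scale F wmult_scale_left sum_distrib_left)
qed

lemma I_eps_diff:
  assumes "F \<in> (I_eps :: 'k::comm_ring_1 wser set)" "G \<in> I_eps"
  shows "(\<lambda>h. F h - G h) \<in> I_eps"
  using I_eps_add[OF assms(1) I_eps_scale[OF assms(2), of "- 1"]] by simp

lemma I_eps_sum:
  assumes "finite S" "\<And>s. s \<in> S \<Longrightarrow> F s \<in> (I_eps :: 'k::comm_ring_1 wser set)"
  shows "(\<lambda>h. \<Sum>s\<in>S. F s h) \<in> I_eps"
  using assms
proof (induction S rule: finite_induct)
  case empty
  then show ?case using I_eps_zero by simp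
next
  case (insert x S)
  then show ?case using I_eps_add[of "F x" "\<lambda>h. \<Sum>s\<in>S. F s h"] by simp
qed

lemma wmult_Mq_in_I_eps:
  assumes "is_comp u" "\<gamma> \<noteq> []" "hd \<gamma> = Eps"
  shows "(\<lambda>h. wmult (Mq u) (Mq \<gamma>) h) \<in> (I_eps :: 'k::comm_ring_1 wser set)"
proof (cases "is_comp \<gamma>")
  case True
  have "Mq u \<in> (WCQSym :: 'k wser set)"
    unfolding WCQSym_def using assms(1) by (intro CollectI exI[of _ "{u}"] exI[of _ "\<lambda>_. 1"]) simp
  then show ?thesis
    unfolding I_eps_def using True assms
    by (intro CollectI exI[of _ 1] exI[of _ "\<lambda>_. Mq u"] exI[of _ "\<lambda>_. \<gamma>"]) (simp add: C_eps_def)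
next
  case False
  then show ?thesis
    using I_eps_zero by (simp add: Mq_not_comp wmult_def)
qed

lemma wmult_Mq_Nil_left: "wmult (Mq []) (Mq \<gamma>) h = (Mq \<gamma> h :: 'k::comm_ring_1)"
  by (cases "finsupp h") (simp_all add: wmult_Mq_Mq qsh_count_Nil_left Mq_eq_comp_of wmult_not_finsupp)

lemma Mq_in_I_eps: "\<gamma> \<noteq> [] \<Longrightarrow> hd \<gamma> = Eps \<Longrightarrow> Mq \<gamma> \<in> (I_eps :: 'k::comm_ring_1 wser set)"
  using wmult_Mq_in_I_eps[of "[]" \<gamma>] by (simp add: wmult_Mq_Nil_left is_comp_def)

lemma sum_qsh_count_Nil_left:
  "(\<Sum>s\<in>qsh_range [] v. of_nat (qsh_count [] v s) * F s) = (F v :: 'k::comm_ring_1)"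
proof -
  have "v \<in> qsh_range [] v"
    by (rule qsh_count_nonzero_imp_in_range) (simp add: qsh_count_Nil_left)
  have "(\<Sum>s\<in>qsh_range [] v. of_nat (qsh_count [] v s) * F s)
      = (\<Sum>s\<in>qsh_range [] v. if s = v then F s else 0)"
    by (rule sum.cong) (simp_all add: qsh_count_Nil_left)
  also have "\<dots> = F v"
    using \<open>v \<in> qsh_range [] v\<close> by (simp add: finite_qsh_range)
  finally show ?thesis .
qed

lemma Mq_insert_Eps_in_I_eps:
  assumes "u \<noteq> []" "is_comp u" "hd u \<noteq> Eps"
  shows "(\<lambda>h. Mq (u @ Eps # v) h + Mq (u @ v) h) \<in> (I_eps :: 'k::comm_ring_1 wser set)"
  using assms
proof (induction "length u" arbitrary: u v rule: less_induct)
  case less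
  define T where "T j s h = (Mq (take j u @ Eps # s) h + Mq (take j u @ s) h :: 'k)" for j s h
  define head where "head h = (\<Sum>s\<in>qsh_range u v. of_nat (qsh_count u v s) * Mq (Eps # s) h :: 'k)" for h
  define middle where "middle h = (\<Sum>j = 1..<length u. \<Sum>s\<in>qsh_range (drop j u) v.
      of_nat (qsh_count (drop j u) v s) * T j s h)" for h
  have "{1..length u} = insert (length u) {1..<length u}"
    using less.prems(1) by (cases u) auto
  \<comment> \<open>The summand j = length u of the product formula is M_(u eps v) + M_(u v).\<close>
  then have expansion: "Mq (u @ Eps # v) h + Mq (u @ v) h = wmult (Mq u) (Mq (Eps # v)) h - head h - middle h"
    for h
    unfolding wmult_Mq_Mq_Eps_Cons[OF less.prems(2)]
    by (simp add: head_def middle_def T_def sum_qsh_count_Nil_left eq_diff_eq ac_simps)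
  have "(\<lambda>h. wmult (Mq u) (Mq (Eps # v)) h) \<in> (I_eps :: 'k wser set)"
    using less.prems(2) by (rule wmult_Mq_in_I_eps) simp_all
  moreover have "head \<in> I_eps"
    unfolding head_def by (intro I_eps_sum finite_qsh_range I_eps_scale Mq_in_I_eps) simp_all
  moreover have "T j s \<in> I_eps" if "j \<in> {1..<length u}" for j s
    unfolding T_def
  proof (rule less.hyps)
    show "length (take j u) < length u" "take j u \<noteq> []" "hd (take j u) \<noteq> Eps"
      using that less.prems(1,3) by auto
    show "is_comp (take j u)"
      using less.prems(2) set_take_subset[of j u] by (auto simp: is_comp_def)
  qed
  then have "middle \<in> I_eps"
    unfolding middle_def by (intro I_eps_sum finite_qsh_range I_eps_scale) simp_all
  ultimately show ?case
    unfolding expansion by (intro I_eps_diff)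
qed

lemma C_N_split_first_Eps:
  assumes "\<alpha> \<in> C_N" "Eps \<in> set \<alpha>"
  obtains u v where "\<alpha> = u @ Eps # v" "u \<noteq> []" "is_comp u" "hd u \<noteq> Eps" "u @ v \<in> C_N"
    "len_eps \<alpha> = Suc (len_eps (u @ v))" "bar (u @ v) = bar \<alpha>"
proof -
  obtain u v where \<alpha>: "\<alpha> = u @ Eps # v" and "Eps \<notin> set u"
    using assms(2) by (metis split_list_first)
  moreover have "u \<noteq> []"
    using assms(1) \<alpha> by (auto simp: C_N_def)
  moreover have "hd u \<noteq> Eps"
    using assms(1) \<alpha> \<open>u \<noteq> []\<close> by (auto simp: C_N_def)
  moreover have "is_comp u" "is_comp (u @ v)"
    using assms(1) \<alpha> by (auto simp: C_N_def is_comp_def)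
  ultimately show ?thesis
    by (intro that) (auto simp: C_N_def len_eps_def bar_def filter_empty_conv)
qed

theorem lemma3p11:
  fixes \<alpha> :: "ntilde list"
  assumes k_Q: "\<forall>n::nat. n \<noteq> 0 \<longrightarrow> (\<exists>y::'k::comm_ring_1. of_nat n * y = 1)"
    and "\<alpha> \<in> C_N"
  shows "(\<lambda>h. Mq \<alpha> h + (-1) ^ (len_eps \<alpha> + 1) * Mq (bar \<alpha>) h) \<in> (I_eps :: 'k wser set)"
  using assms(2)
proof (induction "len_eps \<alpha>" arbitrary: \<alpha>)
  case 0
  then have "bar \<alpha> = \<alpha>"
    by (simp add: len_eps_def bar_def filter_empty_conv)
  then show ?case
    using 0 I_eps_zero by simp
next
  case (Suc k)
  have "filter (\<lambda>x. x = Eps) \<alpha> \<noteq> []"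
    using Suc.hyps(2) by (auto simp: len_eps_def)
  then have "Eps \<in> set \<alpha>"
    by (auto simp: filter_empty_conv)
  then obtain u v where \<alpha>: "\<alpha> = u @ Eps # v" and u: "u \<noteq> []" "is_comp u" "hd u \<noteq> Eps"
    and uv: "u @ v \<in> C_N" "len_eps \<alpha> = Suc (len_eps (u @ v))" "bar (u @ v) = bar \<alpha>"
    using C_N_split_first_Eps[OF Suc.prems] by blast
  have "(\<lambda>h. Mq (u @ v) h + (-1) ^ (k + 1) * Mq (bar \<alpha>) h) \<in> (I_eps :: 'k wser set)"
    using Suc.hyps(1)[OF _ uv(1)] Suc.hyps(2) uv(2,3) by simp
  with Mq_insert_Eps_in_I_eps[OF u, of v]
  have "(\<lambda>h. (Mq (u @ Eps # v) h + Mq (u @ v) h)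
        - (Mq (u @ v) h + (-1) ^ (k + 1) * Mq (bar \<alpha>) h)) \<in> (I_eps :: 'k wser set)"
    by (rule I_eps_diff)
  then show ?case
    using \<alpha> Suc.hyps(2) by simp
qed

end
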